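(* Suppose the e-values are valid, i.e. $\mathbb{E}[e_t\mid\mathcal{F}_{t-1}]\le1$ a.s. whenever $\theta_t=0$, and fix $d\in(0,1]$. (a) If the $\mathcal{F}_{t-1}$-measurable testing levels satisfy, a.s. for every $t\ge1$, $$\mathrm{mem\text{-}}\widehat{\mathrm{FDP}}^{\mathrm{LORD}}(t):=\sum_{j=1}^t\frac{\alpha_j}{dR^{\mathrm d}_{j-1}+1}\le\alpha,$$ then $\mathrm{mem\text{-}FDR}(t)\le\alpha$ for all $t$. (b) Let $(\lambda_t)_{t\ge1}$ be $(0,1)$-valued with each $\lambda_t$ $\mathcal{F}_{t-1}$-measurable, and define $$\mathrm{mem\text{-}}\widehat{\mathrm{FDP}}^{\mathrm{SAFFRON}}(t):=\sum_{j=1}^t\frac{\alpha_j}{dR^{\mathrm d}_{j-1}+1}\cdot\frac{\mathbb{1}\{e_j<1/\lambda_j\}}{1-\lambda_j}.$$ Then $\mathbb{E}[\mathrm{mem\text{-}}\widehat{\mathrm{FDP}}^{\mathrm{SAFFRON}}(t)]\ge\mathbb{E}[\mathrm{mem\text{-}FDP}^*(t)]$ for all $t$, where $\mathrm{mem\text{-}FDP}^*(t)=\sum_{j\in\mathcal{H}_0(t)}\alpha_j/(dR^{\mathrm d}_{j-1}+1)$; and if the testing levels satisfy $\mathrm{mem\text{-}}\widehat{\mathrm{FDP}}^{\mathrm{SAFFRON}}(t)\le\alpha$ a.s. for every $t$, then $\mathrm{mem\text{-}FDR}(t)\le\alpha$ for all $t$.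
   Context: Let $\alpha\in(0,1)$ be a target level. Hypotheses are indexed by $t=1,2,\dots$; $\theta_t\in\{0,1\}$ is a fixed (non-random) indicator with $\theta_t=0$ iff the $t$-th null hypothesis is true. $e_1,e_2,\dots$ are nonnegative random variables (e-values). Testing levels $\alpha_1,\alpha_2,\dots$ are nonnegative random variables and the decisions are $\delta_t=\mathbb{1}\{e_t\ge 1/\alpha_t\}$ (with $\delta_t=0$ when $\alpha_t=0$). Let $\mathcal{F}_t=\sigma(\delta_1,\dots,\delta_t)$, $\mathcal{F}_0$ trivial; each $\alpha_t$ is required to be $\mathcal{F}_{t-1}$-measurable. $\mathcal{H}_0(t)=\{j\le t:\theta_j=0\}$. For a decay parameter $d\in(0,1]$, $R^{\mathrm d}_t=\sum_{j=1}^t d^{t-j}\delta_j$ with $R^{\mathrm d}_0=0$, and the decaying-memory FDR is $\mathrm{mem\text{-}FDR}(t)=\mathbb{E}\big[\sum_{j\in\mathcal{H}_0(t)}d^{t-j}\delta_j\big/R^{\mathrm d}_t\big]$ with the convention $0/0=0$. *)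

theory Defs
  imports "HOL-Probability.Probability"
begin

definition decision :: "(nat \<Rightarrow> 'a \<Rightarrow> real) \<Rightarrow> (nat \<Rightarrow> 'a \<Rightarrow> real) \<Rightarrow> nat \<Rightarrow> 'a \<Rightarrow> real" where
  "decision e al t \<omega> = (if al t \<omega> > 0 \<and> e t \<omega> \<ge> 1 / al t \<omega> then 1 else 0)"

definition filt :: "'a measure \<Rightarrow> (nat \<Rightarrow> 'a \<Rightarrow> real) \<Rightarrow> nat \<Rightarrow> 'a measure" where
  "filt M X t = sigma (space M) (\<Union>j\<in>{1..t}. {X j -` B \<inter> space M | B. B \<in> sets borel})"

definition Rd :: "real \<Rightarrow> (nat \<Rightarrow> 'a \<Rightarrow> real) \<Rightarrow> nat \<Rightarrow> 'a \<Rightarrow> real" where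
  "Rd d X t \<omega> = (\<Sum>j\<in>{1..t}. d ^ (t - j) * X j \<omega>)"

text \<open>Decaying-memory FDR; null t means theta_t = 0. Division by 0 is 0 in Isabelle (0/0 = 0).\<close>
definition mem_FDR :: "'a measure \<Rightarrow> (nat \<Rightarrow> bool) \<Rightarrow> real \<Rightarrow> (nat \<Rightarrow> 'a \<Rightarrow> real) \<Rightarrow> nat \<Rightarrow> real" where
  "mem_FDR M null d X t = prob_space.expectation M
     (\<lambda>\<omega>. (\<Sum>j\<in>{j\<in>{1..t}. null j}. d ^ (t - j) * X j \<omega>) / Rd d X t \<omega>)"

definition mem_FDP_hat_LORD :: "real \<Rightarrow> (nat \<Rightarrow> 'a \<Rightarrow> real) \<Rightarrow> (nat \<Rightarrow> 'a \<Rightarrow> real) \<Rightarrow> nat \<Rightarrow> 'a \<Rightarrow> real" where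
  "mem_FDP_hat_LORD d X al t \<omega> = (\<Sum>j\<in>{1..t}. al j \<omega> / (d * Rd d X (j - 1) \<omega> + 1))"

definition mem_FDP_hat_SAFFRON :: "real \<Rightarrow> (nat \<Rightarrow> 'a \<Rightarrow> real) \<Rightarrow> (nat \<Rightarrow> 'a \<Rightarrow> real)
    \<Rightarrow> (nat \<Rightarrow> 'a \<Rightarrow> real) \<Rightarrow> (nat \<Rightarrow> 'a \<Rightarrow> real) \<Rightarrow> nat \<Rightarrow> 'a \<Rightarrow> real" where
  "mem_FDP_hat_SAFFRON d X e al lam t \<omega> =
     (\<Sum>j\<in>{1..t}. al j \<omega> / (d * Rd d X (j - 1) \<omega> + 1)
        * (if e j \<omega> < 1 / lam j \<omega> then 1 else 0) / (1 - lam j \<omega>))"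

definition mem_FDP_star :: "(nat \<Rightarrow> bool) \<Rightarrow> real \<Rightarrow> (nat \<Rightarrow> 'a \<Rightarrow> real) \<Rightarrow> (nat \<Rightarrow> 'a \<Rightarrow> real) \<Rightarrow> nat \<Rightarrow> 'a \<Rightarrow> real" where
  "mem_FDP_star null d X al t \<omega> = (\<Sum>j\<in>{j\<in>{1..t}. null j}. al j \<omega> / (d * Rd d X (j - 1) \<omega> + 1))"

end

theory Submission
  imports Defs
begin

text \<open>
  If \<open>\<delta>\<^sub>j = 1\<close> then \<open>R\<^sup>d\<^sub>t \<ge> d\<^bsup>t-j\<^esup> (d R\<^sup>d\<^sub>j\<^sub>-\<^sub>1 + 1)\<close>, and always \<open>\<delta>\<^sub>j \<le> \<alpha>\<^sub>j e\<^sub>j\<close>; so the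
  decaying-memory FDP is bounded pointwise by \<open>\<Sum>\<^sub>j\<^sub>\<in>\<^sub>H\<^sub>0 w\<^sub>j e\<^sub>j\<close> with the
  \<open>\<F>\<^sub>j\<^sub>-\<^sub>1\<close>-measurable discounted levels \<open>w\<^sub>j = \<alpha>\<^sub>j / (d R\<^sup>d\<^sub>j\<^sub>-\<^sub>1 + 1)\<close>. Conditioning on \<open>\<F>\<^sub>j\<^sub>-\<^sub>1\<close>
  and validity of \<open>e\<^sub>j\<close> give \<open>E[w\<^sub>j e\<^sub>j] \<le> E[w\<^sub>j]\<close>, hence
  \<open>mem-FDR(t) \<le> E[mem-FDP\<^sup>*(t)]\<close>. The LORD estimate dominates \<open>mem-FDP\<^sup>*\<close> pointwise.
  For SAFFRON, the conditional Markov inequality \<open>P(e\<^sub>j \<ge> 1/\<lambda>\<^sub>j | \<F>\<^sub>j\<^sub>-\<^sub>1) \<le> \<lambda>\<^sub>j\<close>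
  shows that each null summand of the estimate dominates \<open>w\<^sub>j\<close> in expectation.
\<close>

lemma space_filt [simp]: "space (filt M X t) = space M"
  unfolding filt_def by (simp add: space_measure_of_conv)

lemma sets_filt:
  "sets (filt M X t) =
     sigma_sets (space M) (\<Union>j\<in>{1..t}. {X j -` B \<inter> space M | B. B \<in> sets borel})"
  unfolding filt_def by (rule sets_measure_of) auto

lemma measurable_filt:
  assumes "1 \<le> j" "j \<le> t"
  shows "X j \<in> borel_measurable (filt M X t)"
proof (rule measurableI)
  fix B :: "real set"
  assume "B \<in> sets borel"
  then have "X j -` B \<inter> space M \<in> (\<Union>j\<in>{1..t}. {X j -` B \<inter> space M | B. B \<in> sets borel})"
    using assms by (intro UN_I[of j]) auto
  then show "X j -` B \<inter> space (filt M X t) \<in> sets (filt M X t)"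
    unfolding sets_filt space_filt by (rule sigma_sets.Basic)
qed simp

lemma subalgebra_filt:
  assumes "\<And>j. 1 \<le> j \<Longrightarrow> j \<le> t \<Longrightarrow> X j \<in> borel_measurable M"
  shows "subalgebra M (filt M X t)"
proof -
  have "(\<Union>j\<in>{1..t}. {X j -` B \<inter> space M | B. B \<in> sets borel}) \<subseteq> sets M"
    using assms by (auto intro!: measurable_sets)
  then show ?thesis
    unfolding subalgebra_def sets_filt by (simp add: sets.sigma_sets_subset)
qed

lemma Rd_Suc: "Rd d X (Suc k) \<omega> = d * Rd d X k \<omega> + X (Suc k) \<omega>"
proof -
  have "(\<Sum>j\<in>{1..k}. d ^ (Suc k - j) * X j \<omega>) = (\<Sum>j\<in>{1..k}. d * (d ^ (k - j) * X j \<omega>))"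
    by (intro sum.cong) (auto simp: Suc_diff_le)
  then show ?thesis
    unfolding Rd_def by (simp add: sum_distrib_left)
qed

lemma Rd_nonneg:
  assumes "\<And>j. 0 \<le> X j \<omega>" "0 \<le> d"
  shows "0 \<le> Rd d X t \<omega>"
  unfolding Rd_def using assms by (intro sum_nonneg mult_nonneg_nonneg) auto

lemma discounted_Rd_le:
  assumes "\<And>j. 0 \<le> X j \<omega>" "0 \<le> d" "j \<le> t"
  shows "d ^ (t - j) * Rd d X j \<omega> \<le> Rd d X t \<omega>"
  using assms(3)
proof (induction t)
  case (Suc t)
  show ?case
  proof (cases "j = Suc t")
    case False
    then have "j \<le> t" using Suc.prems by simp
    then have "d ^ (Suc t - j) * Rd d X j \<omega> = d * (d ^ (t - j) * Rd d X j \<omega>)"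
      by (simp add: Suc_diff_le)
    also have "\<dots> \<le> d * Rd d X t \<omega>"
      using Suc.IH[OF \<open>j \<le> t\<close>] assms(2) by (rule mult_left_mono)
    also have "\<dots> \<le> Rd d X (Suc t) \<omega>"
      unfolding Rd_Suc using assms(1) by simp
    finally show ?thesis .
  qed simp
qed simp

lemma decaying_FDP_le_weighted_sum:
  assumes X01: "\<And>j. X j \<omega> = 0 \<or> X j \<omega> = 1"
    and d: "0 < d"
    and X_le: "\<And>j. X j \<omega> \<le> c j"
    and N: "N \<subseteq> {1..t}"
  shows "(\<Sum>j\<in>N. d ^ (t - j) * X j \<omega>) / Rd d X t \<omega>
          \<le> (\<Sum>j\<in>N. c j / (d * Rd d X (j - 1) \<omega> + 1))"
  unfolding sum_divide_distrib
proof (rule sum_mono)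
  fix j
  assume "j \<in> N"
  then have j: "1 \<le> j" "j \<le> t" using N by auto
  have X_nonneg: "\<And>j. 0 \<le> X j \<omega>" using X01 by (metis order_refl zero_le_one)
  let ?D = "d * Rd d X (j - 1) \<omega> + 1"
  have D_pos: "0 < ?D"
    using Rd_nonneg[of X \<omega> d "j - 1"] X_nonneg d by (simp add: add_nonneg_pos)
  show "d ^ (t - j) * X j \<omega> / Rd d X t \<omega> \<le> c j / ?D"
  proof (cases "X j \<omega> = 0")
    case True
    then show ?thesis using X_le[of j] D_pos by simp
  next
    case False
    then have X1: "X j \<omega> = 1" using X01 by blast
    have "Rd d X j \<omega> = ?D"
      using Rd_Suc[of d X "j - 1" \<omega>] j X1 by simp
    then have R_ge: "d ^ (t - j) * ?D \<le> Rd d X t \<omega>"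
      using discounted_Rd_le[of X \<omega> d j t] X_nonneg d j by simp
    have "0 < d ^ (t - j) * ?D" using d D_pos by simp
    then have "d ^ (t - j) * X j \<omega> / Rd d X t \<omega> \<le> 1 / ?D"
      using R_ge D_pos X1 by (simp add: divide_simps mult.commute)
    also have "\<dots> \<le> c j / ?D"
      using X_le[of j] X1 D_pos by (simp add: divide_right_mono)
    finally show ?thesis .
  qed
qed

lemma decision_01: "decision e al j \<omega> = 0 \<or> decision e al j \<omega> = 1"
  unfolding decision_def by auto

lemma decision_le_mult:
  assumes "0 \<le> al j \<omega>" "0 \<le> e j \<omega>"
  shows "decision e al j \<omega> \<le> al j \<omega> * e j \<omega>"
  unfolding decision_def using assms by (auto simp: field_simps)

context sigma_finite_subalgebra
begin

lemma nn_integral_mult_le_if_nn_cond_exp_le_1: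
  assumes f: "f \<in> borel_measurable M" and h: "h \<in> borel_measurable F"
    and f_le: "AE x in M. nn_cond_exp M F f x \<le> 1"
  shows "(\<integral>\<^sup>+ x. h x * f x \<partial>M) \<le> (\<integral>\<^sup>+ x. h x \<partial>M)"
proof -
  have "(\<integral>\<^sup>+ x. h x * f x \<partial>M) = (\<integral>\<^sup>+ x. h x * nn_cond_exp M F f x \<partial>M)"
    by (rule nn_cond_exp_intg[symmetric, OF h f])
  also have "\<dots> \<le> (\<integral>\<^sup>+ x. h x \<partial>M)"
    using f_le by (intro nn_integral_mono_AE) (auto elim!: eventually_mono intro: mult_left_le)
  finally show ?thesis .
qed

lemma conditional_Markov_complement:
  assumes e: "e \<in> borel_measurable M" and lam: "lam \<in> borel_measurable F"
    and lam_bounds: "\<And>x. x \<in> space M \<Longrightarrow> 0 < lam x \<and> lam x < 1"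
    and e_nonneg: "\<And>x. x \<in> space M \<Longrightarrow> 0 \<le> e x"
    and e_le: "AE x in M. nn_cond_exp M F (\<lambda>x. ennreal (e x)) x \<le> 1"
  shows "AE x in M. ennreal (1 - lam x)
                    \<le> nn_cond_exp M F (\<lambda>x. ennreal (if e x < 1 / lam x then 1 else 0)) x"
proof -
  have [measurable]: "lam \<in> borel_measurable M" "e \<in> borel_measurable M"
    using measurable_from_subalg[OF subalg lam] e by auto
  define below where "below x = ennreal (if e x < 1 / lam x then 1 else 0)" for x
  define above where "above x = ennreal (if e x < 1 / lam x then 0 else 1)" for x
  have [measurable]: "below \<in> borel_measurable M" "above \<in> borel_measurable M"
    unfolding below_def above_def by measurable
  have "(\<lambda>x. below x + above x) = (\<lambda>_. 1)"
    by (auto simp: below_def above_def)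
  then have "AE x in M. nn_cond_exp M F below x + nn_cond_exp M F above x = nn_cond_exp M F (\<lambda>_. 1) x"
    using nn_cond_exp_sum[of below above] by simp
  moreover have "AE x in M. 1 = nn_cond_exp M F (\<lambda>_. 1) x"
    by (rule nn_cond_exp_F_meas) simp
  moreover have "AE x in M. nn_cond_exp M F above x
                   \<le> nn_cond_exp M F (\<lambda>x. ennreal (lam x) * ennreal (e x)) x"
  proof (rule nn_cond_exp_mono)
    show "AE x in M. above x \<le> ennreal (lam x) * ennreal (e x)"
    proof (rule AE_I2)
      fix x
      assume x: "x \<in> space M"
      then have "\<not> e x < 1 / lam x \<Longrightarrow> 1 \<le> lam x * e x"
        using lam_bounds[OF x] by (simp add: field_simps)
      then show "above x \<le> ennreal (lam x) * ennreal (e x)"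
        unfolding above_def using lam_bounds[OF x] e_nonneg[OF x]
        by (auto simp: ennreal_mult[symmetric])
    qed
  qed measurable
  moreover have "AE x in M. ennreal (lam x) * nn_cond_exp M F (\<lambda>x. ennreal (e x)) x
                   = nn_cond_exp M F (\<lambda>x. ennreal (lam x) * ennreal (e x)) x"
    by (rule nn_cond_exp_prod) (use lam in measurable)
  ultimately show ?thesis
    using e_le AE_space
  proof eventually_elim
    case (elim x)
    let ?lam = "ennreal (lam x)"
    have "nn_cond_exp M F above x \<le> ?lam * nn_cond_exp M F (\<lambda>x. ennreal (e x)) x"
      using elim by simp
    also have "\<dots> \<le> ?lam"
      by (rule mult_left_le[OF elim(5)]) simp
    finally have above_le: "nn_cond_exp M F above x \<le> ?lam" .
    have "ennreal (1 - lam x) + ?lam = 1"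
      using lam_bounds[of x] elim by (simp add: ennreal_plus[symmetric] del: ennreal_plus)
    also have "\<dots> = nn_cond_exp M F below x + nn_cond_exp M F above x"
      using elim by simp
    also have "\<dots> \<le> nn_cond_exp M F below x + ?lam"
      using above_le by (rule add_left_mono)
    finally show ?case
      unfolding below_def by (simp add: ennreal_add_left_cancel_le add.commute)
  qed
qed

lemma nn_integral_mult_one_minus_le:
  assumes e: "e \<in> borel_measurable M" and lam: "lam \<in> borel_measurable F"
    and lam_bounds: "\<And>x. x \<in> space M \<Longrightarrow> 0 < lam x \<and> lam x < 1"
    and e_nonneg: "\<And>x. x \<in> space M \<Longrightarrow> 0 \<le> e x"
    and e_le: "AE x in M. nn_cond_exp M F (\<lambda>x. ennreal (e x)) x \<le> 1"
    and h: "h \<in> borel_measurable F"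
  shows "(\<integral>\<^sup>+ x. h x * ennreal (1 - lam x) \<partial>M)
           \<le> (\<integral>\<^sup>+ x. h x * ennreal (if e x < 1 / lam x then 1 else 0) \<partial>M)"
proof -
  have [measurable]: "lam \<in> borel_measurable M"
    using measurable_from_subalg[OF subalg lam] .
  let ?below = "\<lambda>x. ennreal (if e x < 1 / lam x then 1 else 0)"
  have "(\<integral>\<^sup>+ x. h x * ennreal (1 - lam x) \<partial>M) \<le> (\<integral>\<^sup>+ x. h x * nn_cond_exp M F ?below x \<partial>M)"
    using conditional_Markov_complement[OF assms(1-5)]
    by (intro nn_integral_mono_AE) (auto elim!: eventually_mono intro: mult_left_mono)
  also have "\<dots> = (\<integral>\<^sup>+ x. h x * ?below x \<partial>M)"
    by (rule nn_cond_exp_intg[OF h]) (use e in measurable)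
  finally show ?thesis .
qed

end

locale online_e_testing = prob_space M
  for M :: "'a measure" +
  fixes null :: "nat \<Rightarrow> bool" and e al :: "nat \<Rightarrow> 'a \<Rightarrow> real" and d :: real
  assumes d_pos: "0 < d"
    and e_meas: "\<And>t. e t \<in> borel_measurable M"
    and e_nonneg: "\<And>t \<omega>. \<omega> \<in> space M \<Longrightarrow> 0 \<le> e t \<omega>"
    and al_meas: "\<And>t. 1 \<le> t \<Longrightarrow> al t \<in> borel_measurable (filt M (decision e al) (t - 1))"
    and al_nonneg: "\<And>t \<omega>. \<omega> \<in> space M \<Longrightarrow> 0 \<le> al t \<omega>"
    and valid: "\<And>t. 1 \<le> t \<Longrightarrow> null t \<Longrightarrow>
        AE \<omega> in M. nn_cond_exp M (filt M (decision e al) (t - 1)) (\<lambda>x. ennreal (e t x)) \<omega> \<le> 1"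
begin

abbreviation \<delta> :: "nat \<Rightarrow> 'a \<Rightarrow> real" where
  "\<delta> \<equiv> decision e al"

abbreviation F :: "nat \<Rightarrow> 'a measure" where
  "F \<equiv> filt M \<delta>"

lemma measurable_decision: "1 \<le> t \<Longrightarrow> \<delta> t \<in> borel_measurable M"
proof (induction t rule: less_induct)
  case (less t)
  have "subalgebra M (F (t - 1))"
    by (rule subalgebra_filt) (use less in auto)
  then have [measurable]: "al t \<in> borel_measurable M"
    using measurable_from_subalg al_meas less.prems by blast
  have [measurable]: "e t \<in> borel_measurable M" by (rule e_meas)
  show ?case unfolding decision_def by measurable
qed

lemma subalgebra_F: "subalgebra M (F t)"
  by (rule subalgebra_filt) (use measurable_decision in auto)

lemma sigma_finite_subalgebra_F: "sigma_finite_subalgebra M (F t)"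
proof -
  have "finite_measure_subalgebra M (F t)"
    by (intro finite_measure_subalgebra.intro finite_measure_subalgebra_axioms.intro subalgebra_F)
       (rule finite_measure_axioms)
  then show ?thesis by (rule finite_measure_subalgebra_is_sigma_finite)
qed

lemma measurable_Rd: "Rd d \<delta> k \<in> borel_measurable (F k)"
  unfolding Rd_def
  by (intro borel_measurable_sum borel_measurable_times borel_measurable_const measurable_filt) auto

lemma Rd_decision_nonneg: "0 \<le> Rd d \<delta> k \<omega>"
  using Rd_nonneg[of \<delta> \<omega> d k] d_pos by (simp add: decision_def)

definition discounted_level :: "nat \<Rightarrow> 'a \<Rightarrow> real" where
  "discounted_level j \<omega> = al j \<omega> / (d * Rd d \<delta> (j - 1) \<omega> + 1)"

lemma discounted_level_nonneg: "\<omega> \<in> space M \<Longrightarrow> 0 \<le> discounted_level j \<omega>"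
  unfolding discounted_level_def using al_nonneg Rd_decision_nonneg d_pos
  by (simp add: add_nonneg_pos)

lemma measurable_discounted_level:
  "1 \<le> j \<Longrightarrow> discounted_level j \<in> borel_measurable (F (j - 1))"
  unfolding discounted_level_def
  by (intro borel_measurable_divide borel_measurable_add borel_measurable_times
      borel_measurable_const measurable_Rd al_meas)

lemma measurable_discounted_level_M: "1 \<le> j \<Longrightarrow> discounted_level j \<in> borel_measurable M"
  using measurable_from_subalg[OF subalgebra_F measurable_discounted_level] by blast

lemma nn_integral_mem_FDP_star:
  "(\<integral>\<^sup>+ \<omega>. ennreal (mem_FDP_star null d \<delta> al t \<omega>) \<partial>M)
     = (\<Sum>j\<in>{j\<in>{1..t}. null j}. \<integral>\<^sup>+ \<omega>. ennreal (discounted_level j \<omega>) \<partial>M)"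
proof -
  have "(\<integral>\<^sup>+ \<omega>. ennreal (mem_FDP_star null d \<delta> al t \<omega>) \<partial>M)
      = (\<integral>\<^sup>+ \<omega>. (\<Sum>j\<in>{j\<in>{1..t}. null j}. ennreal (discounted_level j \<omega>)) \<partial>M)"
    unfolding mem_FDP_star_def discounted_level_def[symmetric]
    by (intro nn_integral_cong) (simp add: sum_ennreal discounted_level_nonneg)
  also have "\<dots> = (\<Sum>j\<in>{j\<in>{1..t}. null j}. \<integral>\<^sup>+ \<omega>. ennreal (discounted_level j \<omega>) \<partial>M)"
    by (intro nn_integral_sum) (auto intro!: measurable_compose[OF measurable_discounted_level_M measurable_ennreal])
  finally show ?thesis .
qed

definition mem_FDP :: "nat \<Rightarrow> 'a \<Rightarrow> real" where
  "mem_FDP t \<omega> = (\<Sum>j\<in>{j\<in>{1..t}. null j}. d ^ (t - j) * \<delta> j \<omega>) / Rd d \<delta> t \<omega>"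

lemma mem_FDR_eq_nn_integral: "mem_FDR M null d \<delta> t = enn2real (\<integral>\<^sup>+ \<omega>. ennreal (mem_FDP t \<omega>) \<partial>M)"
proof -
  have [measurable]: "Rd d \<delta> t \<in> borel_measurable M"
    using measurable_from_subalg[OF subalgebra_F measurable_Rd] .
  have "(\<lambda>\<omega>. \<Sum>j\<in>{j\<in>{1..t}. null j}. d ^ (t - j) * \<delta> j \<omega>) \<in> borel_measurable M"
    by (intro borel_measurable_sum borel_measurable_times borel_measurable_const measurable_decision) auto
  then have "mem_FDP t \<in> borel_measurable M"
    unfolding mem_FDP_def[abs_def] by measurable
  moreover have "AE \<omega> in M. 0 \<le> mem_FDP t \<omega>"
    unfolding mem_FDP_def using Rd_decision_nonneg decision_01 d_pos
    by (intro AE_I2 divide_nonneg_nonneg sum_nonneg mult_nonneg_nonneg) (auto simp: decision_def)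
  ultimately show ?thesis
    unfolding mem_FDR_def mem_FDP_def[symmetric] by (rule integral_eq_nn_integral)
qed

lemma nn_integral_mem_FDP_le_star:
  "(\<integral>\<^sup>+ \<omega>. ennreal (mem_FDP t \<omega>) \<partial>M) \<le> (\<integral>\<^sup>+ \<omega>. ennreal (mem_FDP_star null d \<delta> al t \<omega>) \<partial>M)"
proof -
  let ?N = "{j\<in>{1..t}. null j}"
  have "(\<integral>\<^sup>+ \<omega>. ennreal (mem_FDP t \<omega>) \<partial>M)
      \<le> (\<integral>\<^sup>+ \<omega>. (\<Sum>j\<in>?N. ennreal (discounted_level j \<omega>) * ennreal (e j \<omega>)) \<partial>M)"
  proof (rule nn_integral_mono)
    fix \<omega>
    assume \<omega>: "\<omega> \<in> space M"
    have "mem_FDP t \<omega> \<le> (\<Sum>j\<in>?N. al j \<omega> * e j \<omega> / (d * Rd d \<delta> (j - 1) \<omega> + 1))"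
      unfolding mem_FDP_def
      by (rule decaying_FDP_le_weighted_sum)
         (auto simp: decision_01 d_pos intro!: decision_le_mult al_nonneg[OF \<omega>] e_nonneg[OF \<omega>])
    also have "\<dots> = (\<Sum>j\<in>?N. discounted_level j \<omega> * e j \<omega>)"
      unfolding discounted_level_def by simp
    finally show "ennreal (mem_FDP t \<omega>) \<le> (\<Sum>j\<in>?N. ennreal (discounted_level j \<omega>) * ennreal (e j \<omega>))"
      using discounted_level_nonneg[OF \<omega>] e_nonneg[OF \<omega>]
      by (simp add: sum_ennreal ennreal_mult[symmetric] ennreal_leI)
  qed
  also have "\<dots> = (\<Sum>j\<in>?N. \<integral>\<^sup>+ \<omega>. ennreal (discounted_level j \<omega>) * ennreal (e j \<omega>) \<partial>M)"
    using measurable_discounted_level_M e_meas by (intro nn_integral_sum) auto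
  also have "\<dots> \<le> (\<Sum>j\<in>?N. \<integral>\<^sup>+ \<omega>. ennreal (discounted_level j \<omega>) \<partial>M)"
  proof (rule sum_mono)
    fix j
    assume "j \<in> ?N"
    then have j: "1 \<le> j" "null j" by auto
    interpret sigma_finite_subalgebra M "F (j - 1)"
      by (rule sigma_finite_subalgebra_F)
    show "(\<integral>\<^sup>+ \<omega>. ennreal (discounted_level j \<omega>) * ennreal (e j \<omega>) \<partial>M)
            \<le> (\<integral>\<^sup>+ \<omega>. ennreal (discounted_level j \<omega>) \<partial>M)"
      using measurable_discounted_level[OF j(1)] e_meas[of j]
      by (intro nn_integral_mult_le_if_nn_cond_exp_le_1 valid j) auto
  qed
  also have "\<dots> = (\<integral>\<^sup>+ \<omega>. ennreal (mem_FDP_star null d \<delta> al t \<omega>) \<partial>M)"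
    by (rule nn_integral_mem_FDP_star[symmetric])
  finally show ?thesis .
qed

lemma mem_FDR_le_if_dominated:
  assumes "0 \<le> \<alpha>"
    and dominated: "\<And>t. (\<integral>\<^sup>+ \<omega>. ennreal (mem_FDP_star null d \<delta> al t \<omega>) \<partial>M)
                         \<le> (\<integral>\<^sup>+ \<omega>. ennreal (estimate t \<omega>) \<partial>M)"
    and bounded: "\<forall>t\<ge>1. AE \<omega> in M. estimate t \<omega> \<le> \<alpha>"
  shows "mem_FDR M null d \<delta> t \<le> \<alpha>"
proof -
  have "(\<integral>\<^sup>+ \<omega>. ennreal (mem_FDP_star null d \<delta> al t \<omega>) \<partial>M) \<le> ennreal \<alpha>"
  proof (cases "t = 0")
    case True
    then show ?thesis by (simp add: mem_FDP_star_def)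
  next
    case False
    then have "(\<integral>\<^sup>+ \<omega>. ennreal (estimate t \<omega>) \<partial>M) \<le> ennreal \<alpha>"
      using bounded \<open>0 \<le> \<alpha>\<close>
      by (intro nn_integral_le_const) (auto elim!: eventually_mono intro: ennreal_leI)
    then show ?thesis
      using dominated order_trans by blast
  qed
  then show ?thesis
    unfolding mem_FDR_eq_nn_integral
    using nn_integral_mem_FDP_le_star \<open>0 \<le> \<alpha>\<close> by (intro enn2real_leI) (auto intro: order_trans)
qed

lemma nn_integral_mem_FDP_star_le_LORD:
  "(\<integral>\<^sup>+ \<omega>. ennreal (mem_FDP_star null d \<delta> al t \<omega>) \<partial>M)
     \<le> (\<integral>\<^sup>+ \<omega>. ennreal (mem_FDP_hat_LORD d \<delta> al t \<omega>) \<partial>M)"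
  unfolding mem_FDP_star_def mem_FDP_hat_LORD_def discounted_level_def[symmetric]
  by (intro nn_integral_mono ennreal_leI sum_mono2) (auto simp: discounted_level_nonneg)

lemma nn_integral_discounted_level_le:
  assumes j: "1 \<le> j" "null j"
    and lam: "lam \<in> borel_measurable (F (j - 1))"
    and lam_bounds: "\<And>\<omega>. \<omega> \<in> space M \<Longrightarrow> 0 < lam \<omega> \<and> lam \<omega> < 1"
  shows "(\<integral>\<^sup>+ \<omega>. ennreal (discounted_level j \<omega>) \<partial>M)
           \<le> (\<integral>\<^sup>+ \<omega>. ennreal (discounted_level j \<omega>
                             * (if e j \<omega> < 1 / lam \<omega> then 1 else 0) / (1 - lam \<omega>)) \<partial>M)"
proof -
  interpret sigma_finite_subalgebra M "F (j - 1)"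
    by (rule sigma_finite_subalgebra_F)
  define h where "h \<omega> = ennreal (discounted_level j \<omega> / (1 - lam \<omega>))" for \<omega>
  have [measurable]: "discounted_level j \<in> borel_measurable (F (j - 1))"
    using measurable_discounted_level[OF j(1)] .
  have h_meas: "h \<in> borel_measurable (F (j - 1))"
    using lam unfolding h_def by measurable
  have factors_nonneg: "0 < 1 - lam \<omega>" "0 \<le> discounted_level j \<omega>" if "\<omega> \<in> space M" for \<omega>
    using lam_bounds[OF that] discounted_level_nonneg[OF that] by auto
  have "(\<integral>\<^sup>+ \<omega>. ennreal (discounted_level j \<omega>) \<partial>M) = (\<integral>\<^sup>+ \<omega>. h \<omega> * ennreal (1 - lam \<omega>) \<partial>M)"
  proof (rule nn_integral_cong)
    fix \<omega>
    assume "\<omega> \<in> space M"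
    note pos = factors_nonneg[OF this]
    then have "discounted_level j \<omega> = discounted_level j \<omega> / (1 - lam \<omega>) * (1 - lam \<omega>)"
      by simp
    with pos show "ennreal (discounted_level j \<omega>) = h \<omega> * ennreal (1 - lam \<omega>)"
      unfolding h_def by (metis divide_nonneg_pos ennreal_mult less_imp_le)
  qed
  also have "\<dots> \<le> (\<integral>\<^sup>+ \<omega>. h \<omega> * ennreal (if e j \<omega> < 1 / lam \<omega> then 1 else 0) \<partial>M)"
    using e_meas e_nonneg lam_bounds valid[OF j] h_meas
    by (intro nn_integral_mult_one_minus_le[OF _ lam]) auto
  also have "\<dots> = (\<integral>\<^sup>+ \<omega>. ennreal (discounted_level j \<omega>
                             * (if e j \<omega> < 1 / lam \<omega> then 1 else 0) / (1 - lam \<omega>)) \<partial>M)"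
    using factors_nonneg unfolding h_def
    by (intro nn_integral_cong) (simp add: ennreal_mult[symmetric])
  finally show ?thesis .
qed

lemma nn_integral_mem_FDP_star_le_SAFFRON:
  assumes lam: "\<And>t. 1 \<le> t \<Longrightarrow> lam t \<in> borel_measurable (F (t - 1))"
    and lam_bounds: "\<And>t \<omega>. 1 \<le> t \<Longrightarrow> \<omega> \<in> space M \<Longrightarrow> 0 < lam t \<omega> \<and> lam t \<omega> < 1"
  shows "(\<integral>\<^sup>+ \<omega>. ennreal (mem_FDP_star null d \<delta> al t \<omega>) \<partial>M)
           \<le> (\<integral>\<^sup>+ \<omega>. ennreal (mem_FDP_hat_SAFFRON d \<delta> e al lam t \<omega>) \<partial>M)"
proof -
  define summand where "summand j \<omega> =
    discounted_level j \<omega> * (if e j \<omega> < 1 / lam j \<omega> then 1 else 0) / (1 - lam j \<omega>)" for j \<omega>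
  have summand_nonneg: "0 \<le> summand j \<omega>" if "1 \<le> j" "\<omega> \<in> space M" for j \<omega>
    unfolding summand_def using lam_bounds[OF that] discounted_level_nonneg[OF that(2)] by simp
  have summand_meas: "(\<lambda>\<omega>. ennreal (summand j \<omega>)) \<in> borel_measurable M" if "1 \<le> j" for j
  proof -
    have [measurable]: "discounted_level j \<in> borel_measurable M" "e j \<in> borel_measurable M"
        "lam j \<in> borel_measurable M"
      using measurable_discounted_level_M e_meas measurable_from_subalg[OF subalgebra_F lam] that
      by auto
    show ?thesis unfolding summand_def by measurable
  qed
  have "(\<integral>\<^sup>+ \<omega>. ennreal (mem_FDP_star null d \<delta> al t \<omega>) \<partial>M)
      \<le> (\<Sum>j\<in>{j\<in>{1..t}. null j}. \<integral>\<^sup>+ \<omega>. ennreal (summand j \<omega>) \<partial>M)"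
    unfolding nn_integral_mem_FDP_star summand_def
    using lam lam_bounds by (intro sum_mono nn_integral_discounted_level_le) auto
  also have "\<dots> \<le> (\<Sum>j\<in>{1..t}. \<integral>\<^sup>+ \<omega>. ennreal (summand j \<omega>) \<partial>M)"
    by (rule sum_mono2) auto
  also have "\<dots> = (\<integral>\<^sup>+ \<omega>. (\<Sum>j\<in>{1..t}. ennreal (summand j \<omega>)) \<partial>M)"
    using summand_meas by (intro nn_integral_sum[symmetric]) auto
  also have "\<dots> = (\<integral>\<^sup>+ \<omega>. ennreal (\<Sum>j\<in>{1..t}. summand j \<omega>) \<partial>M)"
    using summand_nonneg by (intro nn_integral_cong sum_ennreal) auto
  also have "\<dots> = (\<integral>\<^sup>+ \<omega>. ennreal (mem_FDP_hat_SAFFRON d \<delta> e al lam t \<omega>) \<partial>M)"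
    unfolding mem_FDP_hat_SAFFRON_def summand_def discounted_level_def ..
  finally show ?thesis .
qed

end

theorem proposition3:
  fixes M :: "'a measure" and null :: "nat \<Rightarrow> bool"
    and e al :: "nat \<Rightarrow> 'a \<Rightarrow> real" and \<alpha> d :: real
  defines "\<delta> \<equiv> decision e al"
  defines "F \<equiv> filt M \<delta>"
  assumes M: "prob_space M"
    and \<alpha>: "0 < \<alpha>" "\<alpha> < 1"
    and d: "0 < d" "d \<le> 1"
    and e_meas: "\<And>t. e t \<in> borel_measurable M"
    and e_nonneg: "\<And>t \<omega>. \<omega> \<in> space M \<Longrightarrow> 0 \<le> e t \<omega>"
    and al_meas: "\<And>t. t \<ge> 1 \<Longrightarrow> al t \<in> borel_measurable (F (t - 1))"
    and al_nonneg: "\<And>t \<omega>. \<omega> \<in> space M \<Longrightarrow> 0 \<le> al t \<omega>"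
    and valid: "\<And>t. t \<ge> 1 \<Longrightarrow> null t \<Longrightarrow>
        AE \<omega> in M. nn_cond_exp M (F (t - 1)) (\<lambda>x. ennreal (e t x)) \<omega> \<le> 1"
  shows
    "((\<forall>t\<ge>1. AE \<omega> in M. mem_FDP_hat_LORD d \<delta> al t \<omega> \<le> \<alpha>)
        \<longrightarrow> (\<forall>t. mem_FDR M null d \<delta> t \<le> \<alpha>))
     \<and> (\<forall>lam :: nat \<Rightarrow> 'a \<Rightarrow> real.
          (\<forall>t\<ge>1. lam t \<in> borel_measurable (F (t - 1)))
          \<and> (\<forall>t\<ge>1. \<forall>\<omega>\<in>space M. 0 < lam t \<omega> \<and> lam t \<omega> < 1)
        \<longrightarrow> (\<forall>t. (\<integral>\<^sup>+ \<omega>. ennreal (mem_FDP_hat_SAFFRON d \<delta> e al lam t \<omega>) \<partial>M)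
                  \<ge> (\<integral>\<^sup>+ \<omega>. ennreal (mem_FDP_star null d \<delta> al t \<omega>) \<partial>M))
          \<and> ((\<forall>t\<ge>1. AE \<omega> in M. mem_FDP_hat_SAFFRON d \<delta> e al lam t \<omega> \<le> \<alpha>)
              \<longrightarrow> (\<forall>t. mem_FDR M null d \<delta> t \<le> \<alpha>)))"
proof -
  interpret online_e_testing M null e al d
    by (intro online_e_testing.intro online_e_testing_axioms.intro M)
       (use d e_meas e_nonneg al_meas al_nonneg valid in \<open>simp_all add: \<delta>_def F_def\<close>)
  have "0 \<le> \<alpha>" using \<alpha> by simp
  show ?thesis
    unfolding \<delta>_def F_def
  proof (intro conjI impI allI)
    fix t
    assume "\<forall>t\<ge>1. AE \<omega> in M. mem_FDP_hat_LORD d (decision e al) al t \<omega> \<le> \<alpha>"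
    then show "mem_FDR M null d (decision e al) t \<le> \<alpha>"
      by (rule mem_FDR_le_if_dominated[OF \<open>0 \<le> \<alpha>\<close> nn_integral_mem_FDP_star_le_LORD])
  next
    fix lam :: "nat \<Rightarrow> 'a \<Rightarrow> real" and t
    assume lam: "(\<forall>t\<ge>1. lam t \<in> borel_measurable (filt M (decision e al) (t - 1)))
                 \<and> (\<forall>t\<ge>1. \<forall>\<omega>\<in>space M. 0 < lam t \<omega> \<and> lam t \<omega> < 1)"
    then show "(\<integral>\<^sup>+ \<omega>. ennreal (mem_FDP_star null d (decision e al) al t \<omega>) \<partial>M)
                 \<le> (\<integral>\<^sup>+ \<omega>. ennreal (mem_FDP_hat_SAFFRON d (decision e al) e al lam t \<omega>) \<partial>M)"
      by (intro nn_integral_mem_FDP_star_le_SAFFRON) auto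
    assume "\<forall>t\<ge>1. AE \<omega> in M. mem_FDP_hat_SAFFRON d (decision e al) e al lam t \<omega> \<le> \<alpha>"
    then show "mem_FDR M null d (decision e al) t \<le> \<alpha>"
      using lam by (intro mem_FDR_le_if_dominated[OF \<open>0 \<le> \<alpha>\<close> nn_integral_mem_FDP_star_le_SAFFRON]) auto
  qed
qed

end
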